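(* Let $\theta_1,\theta_2,\theta_3\in\mathbb R$ and for $c_1,c_2,c_3\ge0$ with $c_1+c_2+c_3=1$ let $y(c_1,c_2,c_3)=\sum_{1\le k<j\le3}c_jc_k\sin^2\frac{\theta_j-\theta_k}{2}$. (i) If $\sin^2\frac{\theta_1-\theta_2}{2}\sin^2\frac{\theta_2-\theta_3}{2}\sin^2\frac{\theta_3-\theta_1}{2}>0$ and the vector $$\begin{bmatrix}\cos\frac{\theta_2-\theta_3}{2}\csc\frac{\theta_1-\theta_2}{2}\csc\frac{\theta_1-\theta_3}{2}\\ \cos\frac{\theta_1-\theta_3}{2}\csc\frac{\theta_2-\theta_1}{2}\csc\frac{\theta_2-\theta_3}{2}\\ \cos\frac{\theta_1-\theta_2}{2}\csc\frac{\theta_3-\theta_1}{2}\csc\frac{\theta_3-\theta_2}{2}\end{bmatrix}$$ has non-negative components, then $\max y=\frac14$. (ii) Otherwise $\max y=\frac14\max\{\sin^2\frac{\theta_1-\theta_2}{2},\sin^2\frac{\theta_1-\theta_3}{2},\sin^2\frac{\theta_2-\theta_3}{2}\}$. Here the maximum is over all $c_1,c_2,c_3\ge0$ with $c_1+c_2+c_3=1$. *)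

theory Defs
  imports "HOL-Analysis.Analysis"
begin

definition csc :: "real \<Rightarrow> real" where "csc x = 1 / sin x"

definition simplex3 :: "(real \<times> real \<times> real) set" where
  "simplex3 = {(c1,c2,c3). c1 \<ge> 0 \<and> c2 \<ge> 0 \<and> c3 \<ge> 0 \<and> c1 + c2 + c3 = 1}"

definition yfun :: "real \<Rightarrow> real \<Rightarrow> real \<Rightarrow> real \<times> real \<times> real \<Rightarrow> real" where
  "yfun t1 t2 t3 = (\<lambda>(c1,c2,c3).
     c2 * c1 * (sin ((t2 - t1) / 2))\<^sup>2 + c3 * c1 * (sin ((t3 - t1) / 2))\<^sup>2
     + c3 * c2 * (sin ((t3 - t2) / 2))\<^sup>2)"

definition is_max_value :: "('a \<Rightarrow> real) \<Rightarrow> 'a set \<Rightarrow> real \<Rightarrow> bool" where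
  "is_max_value f S v \<longleftrightarrow> v \<in> f ` S \<and> (\<forall>x\<in>S. f x \<le> v)"

end

(*
  Put z_j = cis t_j. Then sin^2((t_j - t_k)/2) = |z_j - z_k|^2 / 4, and the variance identity
  for convex weights gives 4 y(c) = 1 - |c1 z1 + c2 z2 + c3 z3|^2. Hence y <= 1/4, with equality
  exactly when the circumcentre 0 of the triangle z1 z2 z3 is a convex combination of the
  vertices; the given vector, halved, is its barycentric coordinate vector. Otherwise the triangle
  has a non-acute angle, say at z1 (this includes the degenerate case of two equal vertices).
  Then every convex combination p lies beyond the chord z2 z3 in the direction z2 + z3, and
  Cauchy-Schwarz gives |p|^2 >= 1 - |z2 - z3|^2 / 4, i.e. 4 y <= sin^2((t2 - t3)/2). As z2 z3 is
  then the longest side, this bound is the maximum of (ii); it is attained at the midpoint of z2 z3.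
*)

theory Submission
  imports Defs
begin

lemma norm_convex_comb3_sq:
  fixes z1 z2 z3 :: "'a::real_inner"
  assumes "c1 + c2 + c3 = 1"
  shows "(norm (c1 *\<^sub>R z1 + c2 *\<^sub>R z2 + c3 *\<^sub>R z3))\<^sup>2
    = c1 * (norm z1)\<^sup>2 + c2 * (norm z2)\<^sup>2 + c3 * (norm z3)\<^sup>2
      - (c1 * c2 * (dist z1 z2)\<^sup>2 + c1 * c3 * (dist z1 z3)\<^sup>2 + c2 * c3 * (dist z2 z3)\<^sup>2)"
proof -
  have c3: "c3 = 1 - c1 - c2" using assms by simp
  show ?thesis
    unfolding dist_norm power2_norm_eq_inner c3
    by (simp add: inner_commute algebra_simps)
qed

lemma norm_convex_comb3_ge_of_non_acute:
  fixes z1 z2 z3 :: "'a::real_inner"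
  assumes unit: "norm z1 = 1" "norm z2 = 1" "norm z3 = 1"
    and c: "c1 \<ge> 0" "c2 \<ge> 0" "c3 \<ge> 0" "c1 + c2 + c3 = 1"
    and non_acute: "(dist z1 z2)\<^sup>2 + (dist z1 z3)\<^sup>2 \<le> (dist z2 z3)\<^sup>2"
  shows "1 - (dist z2 z3)\<^sup>2 / 4 \<le> (norm (c1 *\<^sub>R z1 + c2 *\<^sub>R z2 + c3 *\<^sub>R z3))\<^sup>2"
proof -
  define p where "p = c1 *\<^sub>R z1 + c2 *\<^sub>R z2 + c3 *\<^sub>R z3"
  define n where "n = z2 + z3"
  define h where "h = 1 + inner z2 z3"
  have sq: "inner z z = 1" if "norm z = 1" for z :: 'a
    using that by (simp add: power2_norm_eq_inner[symmetric])
  have dist_sq: "(dist x y)\<^sup>2 = 2 - 2 * inner x y" if "norm x = 1" "norm y = 1" for x y :: 'a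
    using sq[OF that(1)] sq[OF that(2)]
    by (simp add: dist_norm power2_norm_eq_inner inner_commute algebra_simps)
  have n_z2: "inner n z2 = h" and n_z3: "inner n z3 = h" and n_n: "inner n n = 2 * h"
    using sq[OF unit(2)] sq[OF unit(3)]
    by (simp_all add: n_def h_def inner_commute algebra_simps)
  have n_z1: "h \<le> inner n z1"
    using non_acute unfolding dist_sq[OF unit(1,2)] dist_sq[OF unit(1,3)] dist_sq[OF unit(2,3)]
    by (simp add: n_def h_def inner_commute algebra_simps)
  have "inner n p = c1 * inner n z1 + c2 * h + c3 * h"
    by (simp add: p_def inner_add_right n_z2 n_z3)
  also have "\<dots> \<ge> c1 * h + c2 * h + c3 * h"
    using n_z1 c(1) by (simp add: mult_left_mono)
  finally have n_p: "h \<le> inner n p"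
    using c(4) by (simp add: distrib_right[symmetric])
  have h0: "0 \<le> h"
    using n_n inner_ge_zero[of n] by simp
  have "h * h \<le> inner n p * inner n p"
    using n_p h0 by (simp add: mult_mono)
  also have "\<dots> \<le> inner n n * inner p p"
    using Cauchy_Schwarz_ineq[of n p] by (simp add: power2_eq_square)
  finally have "h * h \<le> h * (2 * inner p p)"
    by (simp add: n_n)
  then have "h \<le> 2 * inner p p"
    using h0 by (cases "h = 0") (auto simp: inner_ge_zero)
  then show ?thesis
    unfolding dist_sq[OF unit(2,3)] p_def[symmetric] power2_norm_eq_inner h_def by (simp add: field_simps)
qed

lemma norm_convex_comb3_ge_Max_of_non_acute:
  fixes z1 z2 z3 :: "'a::real_inner"
  assumes unit: "norm z1 = 1" "norm z2 = 1" "norm z3 = 1"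
    and c: "c1 \<ge> 0" "c2 \<ge> 0" "c3 \<ge> 0" "c1 + c2 + c3 = 1"
    and non_acute: "(dist z1 z2)\<^sup>2 + (dist z1 z3)\<^sup>2 \<le> (dist z2 z3)\<^sup>2
      \<or> (dist z1 z2)\<^sup>2 + (dist z2 z3)\<^sup>2 \<le> (dist z1 z3)\<^sup>2
      \<or> (dist z1 z3)\<^sup>2 + (dist z2 z3)\<^sup>2 \<le> (dist z1 z2)\<^sup>2"
  shows "1 - Max {(dist z1 z2)\<^sup>2, (dist z1 z3)\<^sup>2, (dist z2 z3)\<^sup>2} / 4
    \<le> (norm (c1 *\<^sub>R z1 + c2 *\<^sub>R z2 + c3 *\<^sub>R z3))\<^sup>2"
proof -
  let ?M = "Max {(dist z1 z2)\<^sup>2, (dist z1 z3)\<^sup>2, (dist z2 z3)\<^sup>2}"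
  let ?p = "c1 *\<^sub>R z1 + c2 *\<^sub>R z2 + c3 *\<^sub>R z3"
  have "1 - (dist z2 z3)\<^sup>2 / 4 \<le> (norm ?p)\<^sup>2 \<or> 1 - (dist z1 z3)\<^sup>2 / 4 \<le> (norm ?p)\<^sup>2
      \<or> 1 - (dist z1 z2)\<^sup>2 / 4 \<le> (norm ?p)\<^sup>2"
    using non_acute
  proof (elim disjE)
    assume "(dist z1 z2)\<^sup>2 + (dist z1 z3)\<^sup>2 \<le> (dist z2 z3)\<^sup>2"
    with norm_convex_comb3_ge_of_non_acute[OF unit c] show ?thesis by blast
  next
    assume "(dist z1 z2)\<^sup>2 + (dist z2 z3)\<^sup>2 \<le> (dist z1 z3)\<^sup>2"
    then have "(dist z2 z1)\<^sup>2 + (dist z2 z3)\<^sup>2 \<le> (dist z1 z3)\<^sup>2"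
      by (simp add: dist_commute)
    from norm_convex_comb3_ge_of_non_acute[OF unit(2,1,3) c(2,1,3) _ this] c(4) show ?thesis
      by (simp add: add_ac)
  next
    assume "(dist z1 z3)\<^sup>2 + (dist z2 z3)\<^sup>2 \<le> (dist z1 z2)\<^sup>2"
    then have "(dist z3 z1)\<^sup>2 + (dist z3 z2)\<^sup>2 \<le> (dist z1 z2)\<^sup>2"
      by (simp add: dist_commute)
    from norm_convex_comb3_ge_of_non_acute[OF unit(3,1,2) c(3,1,2) _ this] c(4) show ?thesis
      by (simp add: add_ac)
  qed
  moreover have "(dist z1 z2)\<^sup>2 \<le> ?M" "(dist z1 z3)\<^sup>2 \<le> ?M" "(dist z2 z3)\<^sup>2 \<le> ?M"
    by simp_all
  ultimately show ?thesis by linarith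
qed

lemma sin_sq_add_sin_sq_sub_sin_diff_sq:
  fixes x y :: real
  shows "(sin x)\<^sup>2 + (sin y)\<^sup>2 - (sin (y - x))\<^sup>2 = 2 * sin x * sin y * cos (y - x)"
proof -
  have "(sin x)\<^sup>2 + (cos x)\<^sup>2 = 1" "(sin y)\<^sup>2 + (cos y)\<^sup>2 = 1" by simp_all
  then show ?thesis
    unfolding sin_diff cos_diff by algebra
qed

lemma sin_sq_add_le_sin_diff_sq:
  fixes x y :: real
  assumes "sin x = 0 \<or> sin y = 0 \<or> cos (y - x) * csc x * csc y < 0"
  shows "(sin x)\<^sup>2 + (sin y)\<^sup>2 \<le> (sin (y - x))\<^sup>2"
proof -
  have "sin x * sin y * cos (y - x) \<le> 0"
  proof (cases "sin x = 0 \<or> sin y = 0")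
    case False
    then have "sin x * sin y * cos (y - x) = cos (y - x) * csc x * csc y * (sin x * sin y)\<^sup>2"
      by (simp add: csc_def field_simps power2_eq_square)
    moreover have "cos (y - x) * csc x * csc y * (sin x * sin y)\<^sup>2 < 0"
      using assms False by (simp add: mult_neg_pos)
    ultimately show ?thesis by linarith
  qed auto
  then show ?thesis
    using sin_sq_add_sin_sq_sub_sin_diff_sq[of x y] by simp
qed

lemma sin_diff_cyclic_sum:
  fixes t1 t2 t3 :: real
  shows "sin (t2 - t3) - sin (t1 - t3) + sin (t1 - t2)
    = 4 * sin ((t1 - t2) / 2) * sin ((t1 - t3) / 2) * sin ((t2 - t3) / 2)"
proof -
  have half_angles: "sin (2 * (y - x)) - sin (2 * y) + sin (2 * x) = 4 * sin x * sin y * sin (y - x)"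
    for x y :: real
  proof -
    have "(2 * x - 2 * y) / 2 = - (y - x)" "(2 * x + 2 * y) / 2 = x + y"
      by simp_all
    then have "sin (2 * x) - sin (2 * y) = - 2 * sin (y - x) * cos (x + y)"
      using sin_diff_sin[of "2 * x" "2 * y"] by (simp only: sin_minus)
    moreover have "sin (2 * (y - x)) = 2 * sin (y - x) * cos (y - x)"
      by (rule sin_double)
    moreover have "cos (y - x) - cos (x + y) = 2 * sin x * sin y"
      using sin_times_sin[of y x] by (simp add: add.commute algebra_simps)
    ultimately show ?thesis
      by (simp add: algebra_simps)
  qed
  have e: "(t1 - t3) / 2 - (t1 - t2) / 2 = (t2 - t3) / 2" "2 * ((t2 - t3) / 2) = t2 - t3"
    "2 * ((t1 - t3) / 2) = t1 - t3" "2 * ((t1 - t2) / 2) = t1 - t2"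
    by (simp_all add: field_simps)
  show ?thesis
    using half_angles[where x = "(t1 - t2) / 2" and y = "(t1 - t3) / 2", unfolded e] .
qed

lemma sin_diff_cyclic_cis_sum:
  fixes t1 t2 t3 :: real
  shows "sin (t2 - t3) *\<^sub>R cis t1 - sin (t1 - t3) *\<^sub>R cis t2 + sin (t1 - t2) *\<^sub>R cis t3 = 0"
  by (simp add: complex_eq_iff sin_diff algebra_simps)

lemma sin_half_diff_commute:
  fixes a b :: real
  shows "sin ((b - a) / 2) = - sin ((a - b) / 2)"
proof -
  have "(b - a) / 2 = - ((a - b) / 2)" by (simp add: field_simps)
  then show ?thesis by (simp only: sin_minus)
qed

lemma circumcentre_weights:
  fixes t1 t2 t3 :: real
  assumes "sin ((t1 - t2) / 2) \<noteq> 0" "sin ((t1 - t3) / 2) \<noteq> 0" "sin ((t2 - t3) / 2) \<noteq> 0"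
  defines "k1 \<equiv> cos ((t2 - t3) / 2) * csc ((t1 - t2) / 2) * csc ((t1 - t3) / 2)"
    and "k2 \<equiv> cos ((t1 - t3) / 2) * csc ((t2 - t1) / 2) * csc ((t2 - t3) / 2)"
    and "k3 \<equiv> cos ((t1 - t2) / 2) * csc ((t3 - t1) / 2) * csc ((t3 - t2) / 2)"
  shows "k1 + k2 + k3 = 2" and "k1 *\<^sub>R cis t1 + k2 *\<^sub>R cis t2 + k3 *\<^sub>R cis t3 = 0"
proof -
  define s where "s = 2 * sin ((t1 - t2) / 2) * sin ((t1 - t3) / 2) * sin ((t2 - t3) / 2)"
  have s0: "s \<noteq> 0" using assms(1-3) by (simp add: s_def)
  have sin_diff_half: "sin (a - b) = 2 * sin ((a - b) / 2) * cos ((a - b) / 2)" for a b :: real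
    using sin_double[of "(a - b) / 2", unfolded mult_2 field_sum_of_halves] by simp
  have k: "k1 = sin (t2 - t3) / s" "k2 = - sin (t1 - t3) / s" "k3 = sin (t1 - t2) / s"
    using assms(1-3)
    by (simp_all add: k1_def k2_def k3_def s_def sin_half_diff_commute[where a = t1 and b = t2]
        sin_half_diff_commute[where a = t1 and b = t3] sin_half_diff_commute[where a = t2 and b = t3]
        csc_def sin_diff_half[of t2 t3] sin_diff_half[of t1 t3] sin_diff_half[of t1 t2])
  show "k1 + k2 + k3 = 2"
    using s0 sin_diff_cyclic_sum[of t2 t3 t1] by (simp add: k s_def field_simps)
  have "k1 *\<^sub>R cis t1 + k2 *\<^sub>R cis t2 + k3 *\<^sub>R cis t3
      = (1 / s) *\<^sub>R (sin (t2 - t3) *\<^sub>R cis t1 - sin (t1 - t3) *\<^sub>R cis t2 + sin (t1 - t2) *\<^sub>R cis t3)"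
    by (simp add: k scaleR_add_right scaleR_diff_right)
  then show "k1 *\<^sub>R cis t1 + k2 *\<^sub>R cis t2 + k3 *\<^sub>R cis t3 = 0"
    by (simp add: sin_diff_cyclic_cis_sum)
qed

lemma sin_half_diff_sq_eq_dist_cis:
  "(sin ((s - t) / 2))\<^sup>2 = (dist (cis s) (cis t))\<^sup>2 / 4"
proof -
  have "(dist (cis s) (cis t))\<^sup>2 = (cos s - cos t)\<^sup>2 + (sin s - sin t)\<^sup>2"
    by (simp add: dist_norm cmod_power2)
  also have "\<dots> = 2 - 2 * cos (s - t)"
    by (simp add: cos_diff power2_eq_square algebra_simps)
  also have "\<dots> = 4 * (sin ((s - t) / 2))\<^sup>2"
    using cos_double_sin[of "(s - t) / 2", unfolded mult_2 field_sum_of_halves] by simp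
  finally show ?thesis by simp
qed

lemma yfun_eq_norm_cis:
  assumes "c1 + c2 + c3 = 1"
  shows "yfun t1 t2 t3 (c1, c2, c3)
    = (1 - (norm (c1 *\<^sub>R cis t1 + c2 *\<^sub>R cis t2 + c3 *\<^sub>R cis t3))\<^sup>2) / 4"
  using norm_convex_comb3_sq[OF assms, of "cis t1" "cis t2" "cis t3"] assms
  by (simp add: yfun_def sin_half_diff_sq_eq_dist_cis dist_commute algebra_simps)

lemma yfun_le_quarter:
  assumes "c1 + c2 + c3 = 1"
  shows "yfun t1 t2 t3 (c1, c2, c3) \<le> 1 / 4"
  using yfun_eq_norm_cis[OF assms] by simp

lemma yfun_edge_midpoints:
  "yfun t1 t2 t3 (1/2, 1/2, 0) = (sin ((t1 - t2) / 2))\<^sup>2 / 4"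
  "yfun t1 t2 t3 (1/2, 0, 1/2) = (sin ((t1 - t3) / 2))\<^sup>2 / 4"
  "yfun t1 t2 t3 (0, 1/2, 1/2) = (sin ((t2 - t3) / 2))\<^sup>2 / 4"
  by (simp_all add: yfun_def sin_half_diff_sq_eq_dist_cis dist_commute)

lemma is_max_value_yfun_quarter:
  fixes t1 t2 t3 :: real
  assumes "(sin ((t1 - t2) / 2))\<^sup>2 * (sin ((t2 - t3) / 2))\<^sup>2 * (sin ((t3 - t1) / 2))\<^sup>2 > 0"
    and "cos ((t2 - t3) / 2) * csc ((t1 - t2) / 2) * csc ((t1 - t3) / 2) \<ge> 0"
    and "cos ((t1 - t3) / 2) * csc ((t2 - t1) / 2) * csc ((t2 - t3) / 2) \<ge> 0"
    and "cos ((t1 - t2) / 2) * csc ((t3 - t1) / 2) * csc ((t3 - t2) / 2) \<ge> 0"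
  shows "is_max_value (yfun t1 t2 t3) simplex3 (1 / 4)"
proof -
  let ?k1 = "cos ((t2 - t3) / 2) * csc ((t1 - t2) / 2) * csc ((t1 - t3) / 2)"
  let ?k2 = "cos ((t1 - t3) / 2) * csc ((t2 - t1) / 2) * csc ((t2 - t3) / 2)"
  let ?k3 = "cos ((t1 - t2) / 2) * csc ((t3 - t1) / 2) * csc ((t3 - t2) / 2)"
  have nonzero: "sin ((t1 - t2) / 2) \<noteq> 0" "sin ((t1 - t3) / 2) \<noteq> 0" "sin ((t2 - t3) / 2) \<noteq> 0"
    using assms(1) sin_half_diff_commute[where a = t1 and b = t3] by auto
  note weights = circumcentre_weights[OF nonzero]
  have "(?k1 / 2, ?k2 / 2, ?k3 / 2) \<in> simplex3"
    using assms(2-4) weights(1) by (simp add: simplex3_def)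
  moreover have "yfun t1 t2 t3 (?k1 / 2, ?k2 / 2, ?k3 / 2) = 1 / 4"
  proof -
    have "(?k1 / 2) *\<^sub>R cis t1 + (?k2 / 2) *\<^sub>R cis t2 + (?k3 / 2) *\<^sub>R cis t3
        = (1 / 2) *\<^sub>R (?k1 *\<^sub>R cis t1 + ?k2 *\<^sub>R cis t2 + ?k3 *\<^sub>R cis t3)"
      by (simp add: scaleR_add_right)
    with weights(2) have "(?k1 / 2) *\<^sub>R cis t1 + (?k2 / 2) *\<^sub>R cis t2 + (?k3 / 2) *\<^sub>R cis t3 = 0"
      by simp
    then show ?thesis
      using weights(1) by (simp add: yfun_eq_norm_cis)
  qed
  ultimately show ?thesis
    unfolding is_max_value_def simplex3_def using yfun_le_quarter by force
qed

lemma non_acute_vertex_exists: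
  fixes t1 t2 t3 :: real
  assumes "\<not> ((sin ((t1 - t2) / 2))\<^sup>2 * (sin ((t2 - t3) / 2))\<^sup>2 * (sin ((t3 - t1) / 2))\<^sup>2 > 0
            \<and> cos ((t2 - t3) / 2) * csc ((t1 - t2) / 2) * csc ((t1 - t3) / 2) \<ge> 0
            \<and> cos ((t1 - t3) / 2) * csc ((t2 - t1) / 2) * csc ((t2 - t3) / 2) \<ge> 0
            \<and> cos ((t1 - t2) / 2) * csc ((t3 - t1) / 2) * csc ((t3 - t2) / 2) \<ge> 0)"
  shows "(sin ((t1 - t2) / 2))\<^sup>2 + (sin ((t1 - t3) / 2))\<^sup>2 \<le> (sin ((t2 - t3) / 2))\<^sup>2
    \<or> (sin ((t2 - t1) / 2))\<^sup>2 + (sin ((t2 - t3) / 2))\<^sup>2 \<le> (sin ((t1 - t3) / 2))\<^sup>2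
    \<or> (sin ((t3 - t1) / 2))\<^sup>2 + (sin ((t3 - t2) / 2))\<^sup>2 \<le> (sin ((t1 - t2) / 2))\<^sup>2"
proof -
  have e: "(t1 - t3) / 2 - (t1 - t2) / 2 = (t2 - t3) / 2" "(t2 - t3) / 2 - (t2 - t1) / 2 = (t1 - t3) / 2"
    "(t3 - t2) / 2 - (t3 - t1) / 2 = (t1 - t2) / 2"
    by (simp_all add: field_simps)
  note vertex1 = sin_sq_add_le_sin_diff_sq[where x = "(t1 - t2) / 2" and y = "(t1 - t3) / 2", unfolded e]
  note vertex2 = sin_sq_add_le_sin_diff_sq[where x = "(t2 - t1) / 2" and y = "(t2 - t3) / 2", unfolded e]
  note vertex3 = sin_sq_add_le_sin_diff_sq[where x = "(t3 - t1) / 2" and y = "(t3 - t2) / 2", unfolded e]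
  have "sin ((t1 - t2) / 2) = 0 \<or> sin ((t2 - t3) / 2) = 0 \<or> sin ((t3 - t1) / 2) = 0
    \<or> cos ((t2 - t3) / 2) * csc ((t1 - t2) / 2) * csc ((t1 - t3) / 2) < 0
    \<or> cos ((t1 - t3) / 2) * csc ((t2 - t1) / 2) * csc ((t2 - t3) / 2) < 0
    \<or> cos ((t1 - t2) / 2) * csc ((t3 - t1) / 2) * csc ((t3 - t2) / 2) < 0"
    using assms by (auto simp: zero_less_mult_iff not_le)
  then show ?thesis
    using vertex1 vertex2 vertex3 by blast
qed

lemma is_max_value_yfun_Max_of_non_acute:
  fixes t1 t2 t3 :: real
  assumes "(sin ((t1 - t2) / 2))\<^sup>2 + (sin ((t1 - t3) / 2))\<^sup>2 \<le> (sin ((t2 - t3) / 2))\<^sup>2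
    \<or> (sin ((t2 - t1) / 2))\<^sup>2 + (sin ((t2 - t3) / 2))\<^sup>2 \<le> (sin ((t1 - t3) / 2))\<^sup>2
    \<or> (sin ((t3 - t1) / 2))\<^sup>2 + (sin ((t3 - t2) / 2))\<^sup>2 \<le> (sin ((t1 - t2) / 2))\<^sup>2"
  shows "is_max_value (yfun t1 t2 t3) simplex3
    (1 / 4 * Max {(sin ((t1 - t2) / 2))\<^sup>2, (sin ((t1 - t3) / 2))\<^sup>2, (sin ((t2 - t3) / 2))\<^sup>2})"
  unfolding is_max_value_def
proof
  let ?S = "{(sin ((t1 - t2) / 2))\<^sup>2, (sin ((t1 - t3) / 2))\<^sup>2, (sin ((t2 - t3) / 2))\<^sup>2}"
  have midpoints: "(1/2, 1/2, 0) \<in> simplex3" "(1/2, 0, 1/2) \<in> simplex3" "(0, 1/2, 1/2) \<in> simplex3"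
    by (simp_all add: simplex3_def)
  have "Max ?S \<in> ?S" by (rule Max_in) simp_all
  then show "1 / 4 * Max ?S \<in> yfun t1 t2 t3 ` simplex3"
    using midpoints yfun_edge_midpoints[of t1 t2 t3]
    by (auto intro: rev_image_eqI[where f = "yfun t1 t2 t3"])
  show "\<forall>c\<in>simplex3. yfun t1 t2 t3 c \<le> 1 / 4 * Max ?S"
  proof
    fix c
    assume "c \<in> simplex3"
    then obtain c1 c2 c3 where c_eq: "c = (c1, c2, c3)"
      and c: "0 \<le> c1" "0 \<le> c2" "0 \<le> c3" "c1 + c2 + c3 = 1"
      by (auto simp: simplex3_def)
    have "1 - Max {(dist (cis t1) (cis t2))\<^sup>2, (dist (cis t1) (cis t3))\<^sup>2, (dist (cis t2) (cis t3))\<^sup>2} / 4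
        \<le> (norm (c1 *\<^sub>R cis t1 + c2 *\<^sub>R cis t2 + c3 *\<^sub>R cis t3))\<^sup>2"
      using assms
      by (intro norm_convex_comb3_ge_Max_of_non_acute c)
        (simp_all add: sin_half_diff_sq_eq_dist_cis dist_commute)
    moreover have "Max {(dist (cis t1) (cis t2))\<^sup>2, (dist (cis t1) (cis t3))\<^sup>2, (dist (cis t2) (cis t3))\<^sup>2}
        = 4 * Max ?S"
      by (simp add: sin_half_diff_sq_eq_dist_cis max_def)
    ultimately show "yfun t1 t2 t3 c \<le> 1 / 4 * Max ?S"
      using yfun_eq_norm_cis[OF c(4)] by (simp add: c_eq)
  qed
qed

theorem lemma6:
  fixes t1 t2 t3 :: real
  shows "(((sin ((t1 - t2) / 2))\<^sup>2 * (sin ((t2 - t3) / 2))\<^sup>2 * (sin ((t3 - t1) / 2))\<^sup>2 > 0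
            \<and> cos ((t2 - t3) / 2) * csc ((t1 - t2) / 2) * csc ((t1 - t3) / 2) \<ge> 0
            \<and> cos ((t1 - t3) / 2) * csc ((t2 - t1) / 2) * csc ((t2 - t3) / 2) \<ge> 0
            \<and> cos ((t1 - t2) / 2) * csc ((t3 - t1) / 2) * csc ((t3 - t2) / 2) \<ge> 0)
          \<longrightarrow> is_max_value (yfun t1 t2 t3) simplex3 (1 / 4))
       \<and> (\<not> ((sin ((t1 - t2) / 2))\<^sup>2 * (sin ((t2 - t3) / 2))\<^sup>2 * (sin ((t3 - t1) / 2))\<^sup>2 > 0
            \<and> cos ((t2 - t3) / 2) * csc ((t1 - t2) / 2) * csc ((t1 - t3) / 2) \<ge> 0
            \<and> cos ((t1 - t3) / 2) * csc ((t2 - t1) / 2) * csc ((t2 - t3) / 2) \<ge> 0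
            \<and> cos ((t1 - t2) / 2) * csc ((t3 - t1) / 2) * csc ((t3 - t2) / 2) \<ge> 0)
          \<longrightarrow> is_max_value (yfun t1 t2 t3) simplex3
                (1 / 4 * Max {(sin ((t1 - t2) / 2))\<^sup>2, (sin ((t1 - t3) / 2))\<^sup>2, (sin ((t2 - t3) / 2))\<^sup>2}))"
  using is_max_value_yfun_quarter[of t1 t2 t3] is_max_value_yfun_Max_of_non_acute[OF non_acute_vertex_exists, of t1 t2 t3]
  by blast

end
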